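(* Let $\mathcal{G}$ be a finite game in normal form and suppose each player $k$ uses a penalty function $h_k$ on $\mathcal{X}_k$ with induced choice map $Q_k$. Then the reinforcement learning process $$y_k(t)=y_k(0)+\int_0^t v_k(x(s))\,ds,\qquad x_k(t)=Q_k(y_k(t)),\qquad k\in\mathcal{N},$$ (equivalently $\dot y_k=v_k(Q(y))$) admits a unique global solution $y(t)$, $t\ge 0$, for every initial score profile $y(0)\in\mathcal{V}^*\equiv\prod_k\mathbb{R}^{\mathcal{A}_k}$.
   Context: A finite game $\mathcal{G}$ consists of a finite set of players $\mathcal{N}=\{1,\dots,N\}$, finite action sets $\mathcal{A}_k$, and payoff functions $u_k:\prod_\ell\mathcal{A}_\ell\to\mathbb{R}$, extended multilinearly to mixed strategy profiles $x=(x_1,\dots,x_N)\in\mathcal{X}=\prod_k\mathcal{X}_k$, $\mathcal{X}_k=\Delta(\mathcal{A}_k)$ the simplex in $\mathbb{R}^{\mathcal{A}_k}$. The payoff vector of player $k$ is $v_k(x)=(v_{k\alpha}(x))_{\alpha\in\mathcal{A}_k}$ with $v_{k\alpha}(x)=u_k(\alpha;x_{-k})$. A penalty function on a simplex $\Delta\subset\mathbb{R}^n$ is a function $h:\Delta\to\mathbb{R}$ that is continuous on $\Delta$, smooth ($C^\infty$) on the relative interior of every face of $\Delta$ (including $\Delta$), and strongly convex: there is $K>0$ with $h(tx_1+(1-t)x_2)\le th(x_1)+(1-t)h(x_2)-\tfrac12Kt(1-t)\|x_1-x_2\|^2$ for all $x_1,x_2\in\Delta$, $t\in[0,1]$ (for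 a fixed norm $\|\cdot\|$). Its induced choice map is $Q:\mathbb{R}^n\to\Delta$, $Q(y)=\arg\max_{x\in\Delta}\{\langle y,x\rangle-h(x)\}$. $Q=(Q_1,\dots,Q_N)$. *)

theory Defs
  imports "HOL-Analysis.Analysis"
begin

text \<open>Players are the elements of a finite type 'p; actions of all players are drawn from
a finite type 'a, player k having the nonempty action set A k.  A vector in R^{A_k} is
represented by an element of real^'a whose coordinates outside A k vanish.\<close>

definition score_space :: "'a set \<Rightarrow> (real^'a) set" where
  "score_space B = {y. \<forall>\<alpha>. \<alpha> \<notin> B \<longrightarrow> y$\<alpha> = 0}"

definition simplex_on :: "'a set \<Rightarrow> (real^'a) set" where
  "simplex_on B = {x. (\<forall>\<alpha>. 0 \<le> x$\<alpha>) \<and> (\<forall>\<alpha>. \<alpha> \<notin> B \<longrightarrow> x$\<alpha> = 0) \<and> (\<Sum>\<alpha>\<in>B. x$\<alpha>) = 1}"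

definition face_relint :: "'a set \<Rightarrow> (real^'a) set" where
  "face_relint B = {x. (\<forall>\<alpha>\<in>B. 0 < x$\<alpha>) \<and> (\<forall>\<alpha>. \<alpha> \<notin> B \<longrightarrow> x$\<alpha> = 0) \<and> (\<Sum>\<alpha>\<in>B. x$\<alpha>) = 1}"

fun Ck_on :: "nat \<Rightarrow> 'v::euclidean_space set \<Rightarrow> ('v \<Rightarrow> real) \<Rightarrow> bool" where
  "Ck_on 0 U f = continuous_on U f"
| "Ck_on (Suc n) U f = (f differentiable_on U \<and>
      (\<forall>b\<in>Basis. Ck_on n U (\<lambda>x. frechet_derivative f (at x) b)))"

definition smooth_on_open :: "'v::euclidean_space set \<Rightarrow> ('v \<Rightarrow> real) \<Rightarrow> bool" where
  "smooth_on_open U f = (open U \<and> (\<forall>n. Ck_on n U f))"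

definition smooth_on_set :: "'v::euclidean_space set \<Rightarrow> ('v \<Rightarrow> real) \<Rightarrow> bool" where
  "smooth_on_set S h = (\<exists>U g. S \<subseteq> U \<and> smooth_on_open U g \<and> (\<forall>x\<in>S. g x = h x))"

definition strongly_convex_on :: "'v::real_normed_vector set \<Rightarrow> real \<Rightarrow> ('v \<Rightarrow> real) \<Rightarrow> bool" where
  "strongly_convex_on S K h = (\<forall>x1\<in>S. \<forall>x2\<in>S. \<forall>t::real. 0 \<le> t \<and> t \<le> 1 \<longrightarrow>
      h (t *\<^sub>R x1 + (1 - t) *\<^sub>R x2) \<le> t * h x1 + (1 - t) * h x2 - K * t * (1 - t) * (norm (x1 - x2))\<^sup>2 / 2)"

definition penalty_function :: "'a::finite set \<Rightarrow> (real^'a \<Rightarrow> real) \<Rightarrow> bool" where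
  "penalty_function B h =
     (continuous_on (simplex_on B) h \<and>
      (\<forall>F. F \<subseteq> B \<and> F \<noteq> {} \<longrightarrow> smooth_on_set (face_relint F) h) \<and>
      (\<exists>K>0. strongly_convex_on (simplex_on B) K h))"

definition choice_map :: "'a::finite set \<Rightarrow> (real^'a \<Rightarrow> real) \<Rightarrow> real^'a \<Rightarrow> real^'a" where
  "choice_map B h y = (THE x. x \<in> simplex_on B \<and>
      (\<forall>x'\<in>simplex_on B. inner y x' - h x' \<le> inner y x - h x))"

definition mixed_payoff :: "('p::finite \<Rightarrow> 'a::finite set) \<Rightarrow> (('p \<Rightarrow> 'a) \<Rightarrow> real)
    \<Rightarrow> real^'a^'p \<Rightarrow> real" where
  "mixed_payoff A uk x = (\<Sum>\<beta>\<in>PiE UNIV A. uk \<beta> * (\<Prod>l\<in>UNIV. x$l$(\<beta> l)))"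

definition payoff_vector :: "('p::finite \<Rightarrow> 'a::finite set) \<Rightarrow> ('p \<Rightarrow> ('p \<Rightarrow> 'a) \<Rightarrow> real)
    \<Rightarrow> 'p \<Rightarrow> real^'a^'p \<Rightarrow> real^'a" where
  "payoff_vector A u k x = (\<chi> \<alpha>. if \<alpha> \<in> A k then
      mixed_payoff A (u k) (\<chi> l. if l = k then axis \<alpha> 1 else x$l) else 0)"

definition RL_field :: "('p::finite \<Rightarrow> 'a::finite set) \<Rightarrow> ('p \<Rightarrow> ('p \<Rightarrow> 'a) \<Rightarrow> real)
    \<Rightarrow> ('p \<Rightarrow> real^'a \<Rightarrow> real) \<Rightarrow> real^'a^'p \<Rightarrow> real^'a^'p" where
  "RL_field A u h y = (\<chi> k. payoff_vector A u k (\<chi> l. choice_map (A l) (h l) (y$l)))"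

end

theory Submission
  imports Defs
begin

text \<open>The field y \<mapsto> v(Q(y)) is bounded, since Q takes values in a product of simplices
  and the payoffs are multilinear, and it is globally Lipschitz: strong convexity of the
  penalties makes each argmax map Q_k Lipschitz, and multilinear maps are Lipschitz on the unit
  cube. For a bounded Lipschitz field the Picard iterates satisfy
  |p_{n+1}(t) - p_n(t)| \<le> M L^n t^{n+1}/(n+1)!, so they converge locally uniformly to a
  solution of the integral equation; the same bound holds between p_n and any solution, which
  gives uniqueness.\<close>

definition integral_solution :: "('v::real_normed_vector \<Rightarrow> 'v) \<Rightarrow> 'v \<Rightarrow> (real \<Rightarrow> 'v) \<Rightarrow> bool" where
  "integral_solution F y0 y \<longleftrightarrow>
     y 0 = y0 \<and> (\<forall>t\<ge>0. ((\<lambda>s. F (y s)) has_integral (y t - y0)) {0..t})"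

primrec picard_iterate :: "('v::banach \<Rightarrow> 'v) \<Rightarrow> 'v \<Rightarrow> nat \<Rightarrow> real \<Rightarrow> 'v" where
  "picard_iterate F y0 0 = (\<lambda>t. y0)"
| "picard_iterate F y0 (Suc n) = (\<lambda>t. y0 + integral {0..t} (\<lambda>s. F (picard_iterate F y0 n s)))"

lemma has_integral_power_interval:
  assumes "0 \<le> t"
  shows "((\<lambda>s::real. s ^ n) has_integral t ^ Suc n / Suc n) {0..t}"
proof -
  have "((\<lambda>s::real. s ^ Suc n / Suc n) has_real_derivative x ^ n) (at x within {0..t})" for x
    by (rule has_field_derivative_at_within)
      (intro derivative_eq_intros, auto simp del: of_nat_Suc)
  from fundamental_theorem_of_calculus[OF assms, of "\<lambda>s. s ^ Suc n / Suc n"] this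
  show ?thesis by (simp add: has_real_derivative_iff_has_vector_derivative)
qed

locale bounded_lipschitz_field =
  fixes F :: "'v::banach \<Rightarrow> 'v" and L M :: real
  assumes lipschitz: "L-lipschitz_on UNIV F"
    and bounded: "\<And>x. norm (F x) \<le> M"
begin

lemma L_nonneg: "0 \<le> L"
  using lipschitz by (rule lipschitz_on_nonneg)

lemma M_nonneg: "0 \<le> M"
  using bounded[of 0] norm_ge_zero order_trans by blast

lemma uniformly_continuous_on_field: "uniformly_continuous_on UNIV F"
  using lipschitz by (rule lipschitz_on_uniformly_continuous)

lemma continuous_on_field: "continuous_on S F"
  using lipschitz lipschitz_on_continuous_on continuous_on_subset by blast

definition picard_bound :: "nat \<Rightarrow> real \<Rightarrow> real" where
  "picard_bound n t = M * L ^ n * t ^ Suc n / fact (Suc n)"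

lemma picard_bound_0: "picard_bound 0 t = M * t"
  by (simp add: picard_bound_def)

lemma picard_bound_mono: "0 \<le> s \<Longrightarrow> s \<le> t \<Longrightarrow> picard_bound n s \<le> picard_bound n t"
  unfolding picard_bound_def using M_nonneg L_nonneg
  by (intro divide_right_mono mult_left_mono power_mono) auto

lemma summable_picard_bound:
  assumes "0 \<le> t"
  shows "summable (\<lambda>n. picard_bound n t)"
proof (rule summable_comparison_test)
  show "summable (\<lambda>n. M * t * (inverse (fact n) * (L * t) ^ n))"
    by (intro summable_mult summable_exp)
  have "norm (picard_bound n t) \<le> M * t * (inverse (fact n) * (L * t) ^ n)" for n
  proof -
    have "norm (picard_bound n t) = M * t * (L * t) ^ n / fact (Suc n)"
      using M_nonneg L_nonneg assms by (simp add: picard_bound_def power_mult_distrib)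
    also have "\<dots> \<le> M * t * (L * t) ^ n / fact n"
      using M_nonneg L_nonneg assms by (intro divide_left_mono fact_mono) auto
    finally show ?thesis by (simp add: field_simps)
  qed
  then show "\<exists>N. \<forall>n\<ge>N. norm (picard_bound n t) \<le> M * t * (inverse (fact n) * (L * t) ^ n)"
    by blast
qed

lemma has_integral_bound_base:
  assumes "0 \<le> t" and "((\<lambda>s. F (a s)) has_integral I) {0..t}"
  shows "norm I \<le> picard_bound 0 t"
  using has_integral_bound[OF M_nonneg, of "\<lambda>s. F (a s)" I 0 t] assms bounded
  by (simp add: picard_bound_0)

lemma has_integral_diff_bound_step:
  assumes t: "0 \<le> t"
    and a: "((\<lambda>s. F (a s)) has_integral I) {0..t}"
    and c: "((\<lambda>s. F (c s)) has_integral J) {0..t}"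
    and close: "\<And>s. s \<in> {0..t} \<Longrightarrow> norm (a s - c s) \<le> picard_bound n s"
  shows "norm (I - J) \<le> picard_bound (Suc n) t"
proof -
  define C where "C = M * L ^ n / fact (Suc n)"
  have diff: "((\<lambda>s. F (a s) - F (c s)) has_integral I - J) {0..t}"
    using a c by (rule has_integral_diff)
  have power: "((\<lambda>s. L * C * s ^ Suc n) has_integral L * C * (t ^ Suc (Suc n) / Suc (Suc n))) {0..t}"
    by (intro has_integral_mult_right has_integral_power_interval t)
  have "norm (F (a s) - F (c s)) \<le> L * C * s ^ Suc n" if "s \<in> {0..t}" for s
  proof -
    have "norm (F (a s) - F (c s)) \<le> L * norm (a s - c s)"
      using lipschitz by (rule lipschitz_on_normD) auto
    also have "\<dots> \<le> L * picard_bound n s"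
      using close[OF that] L_nonneg by (rule mult_left_mono)
    finally show ?thesis by (simp add: picard_bound_def C_def)
  qed
  then have "norm (integral {0..t} (\<lambda>s. F (a s) - F (c s)))
      \<le> integral {0..t} (\<lambda>s. L * C * s ^ Suc n)"
    using diff power by (intro integral_norm_bound_integral) auto
  then have "norm (I - J) \<le> L * C * (t ^ Suc (Suc n) / Suc (Suc n))"
    using integral_unique[OF diff] integral_unique[OF power] by simp
  also have "\<dots> = picard_bound (Suc n) t"
    by (simp add: picard_bound_def C_def field_simps del: of_nat_Suc)
  finally show ?thesis .
qed

lemma continuous_on_picard_iterate: "continuous_on {0..T} (picard_iterate F y0 n)"
proof (induction n)
  case 0
  then show ?case by simp
next
  case (Suc n)
  have "(\<lambda>s. F (picard_iterate F y0 n s)) integrable_on {0..T}"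
    by (intro integrable_continuous_interval continuous_on_compose2[OF continuous_on_field Suc]) auto
  then show ?case
    by (auto intro!: continuous_intros indefinite_integral_continuous_1)
qed

lemma picard_iterate_has_integral:
  "((\<lambda>s. F (picard_iterate F y0 n s)) has_integral (picard_iterate F y0 (Suc n) t - y0)) {0..t}"
proof -
  have "(\<lambda>s. F (picard_iterate F y0 n s)) integrable_on {0..t}"
    by (intro integrable_continuous_interval
        continuous_on_compose2[OF continuous_on_field continuous_on_picard_iterate]) auto
  then show ?thesis by (simp add: integrable_integral)
qed

lemma norm_picard_iterate_Suc_diff_le:
  "0 \<le> t \<Longrightarrow> norm (picard_iterate F y0 (Suc n) t - picard_iterate F y0 n t) \<le> picard_bound n t"
proof (induction n arbitrary: t)
  case 0
  show ?case
    using has_integral_bound_base[OF 0 picard_iterate_has_integral[of y0 0]] by simp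
next
  case (Suc n)
  then show ?case
    using has_integral_diff_bound_step[OF Suc.prems picard_iterate_has_integral picard_iterate_has_integral,
        of y0 "Suc n" y0 n n]
    by simp
qed

lemma norm_integral_solution_picard_iterate_diff_le:
  assumes z: "integral_solution F y0 z" and "0 \<le> t"
  shows "norm (z t - picard_iterate F y0 n t) \<le> picard_bound n t"
  using \<open>0 \<le> t\<close>
proof (induction n arbitrary: t)
  case 0
  have "((\<lambda>s. F (z s)) has_integral (z t - y0)) {0..t}"
    using z 0 by (simp add: integral_solution_def)
  from has_integral_bound_base[OF 0 this] show ?case by simp
next
  case (Suc n)
  have "((\<lambda>s. F (z s)) has_integral (z t - y0)) {0..t}"
    using z Suc.prems by (simp add: integral_solution_def)
  then have "norm ((z t - y0) - (picard_iterate F y0 (Suc n) t - y0)) \<le> picard_bound (Suc n) t"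
    using Suc.IH by (intro has_integral_diff_bound_step[OF Suc.prems _ picard_iterate_has_integral]) auto
  then show ?case
    by (simp add: diff_diff_eq)
qed

lemma tendsto_picard_iterate_integral_solution:
  assumes "integral_solution F y0 z" and "0 \<le> t"
  shows "(\<lambda>n. picard_iterate F y0 n t) \<longlonglongrightarrow> z t"
proof -
  have "(\<lambda>n. picard_iterate F y0 n t - z t) \<longlonglongrightarrow> 0"
  proof (rule Lim_null_comparison)
    show "\<forall>\<^sub>F n in sequentially. norm (picard_iterate F y0 n t - z t) \<le> picard_bound n t"
      using norm_integral_solution_picard_iterate_diff_le[OF assms]
      by (simp add: norm_minus_commute)
    show "(\<lambda>n. picard_bound n t) \<longlonglongrightarrow> 0"
      using summable_picard_bound[OF \<open>0 \<le> t\<close>] by (rule summable_LIMSEQ_zero)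
  qed
  then show ?thesis by (rule LIM_zero_cancel)
qed

definition picard_limit :: "'v \<Rightarrow> real \<Rightarrow> 'v" where
  "picard_limit y0 t = y0 + (\<Sum>i. picard_iterate F y0 (Suc i) t - picard_iterate F y0 i t)"

lemma uniform_limit_picard_iterate:
  assumes "0 \<le> T"
  shows "uniform_limit {0..T} (picard_iterate F y0) (picard_limit y0) sequentially"
proof -
  have "uniform_limit {0..T} (\<lambda>n t. \<Sum>i<n. picard_iterate F y0 (Suc i) t - picard_iterate F y0 i t)
      (\<lambda>t. \<Sum>i. picard_iterate F y0 (Suc i) t - picard_iterate F y0 i t) sequentially"
  proof (rule Weierstrass_m_test[OF _ summable_picard_bound[OF assms]])
    fix n t assume "t \<in> {0..T}"
    then have "norm (picard_iterate F y0 (Suc n) t - picard_iterate F y0 n t) \<le> picard_bound n t"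
      by (intro norm_picard_iterate_Suc_diff_le) simp
    also have "\<dots> \<le> picard_bound n T"
      using \<open>t \<in> {0..T}\<close> by (intro picard_bound_mono) auto
    finally show "norm (picard_iterate F y0 (Suc n) t - picard_iterate F y0 n t) \<le> picard_bound n T" .
  qed
  then have "uniform_limit {0..T}
      (\<lambda>n t. y0 + (\<Sum>i<n. picard_iterate F y0 (Suc i) t - picard_iterate F y0 i t))
      (picard_limit y0) sequentially"
    unfolding picard_limit_def by (intro uniform_limit_intros)
  moreover have "y0 + (\<Sum>i<n. picard_iterate F y0 (Suc i) t - picard_iterate F y0 i t)
      = picard_iterate F y0 n t" for n t
    by (subst sum_lessThan_telescope) simp
  ultimately show ?thesis
    by simp
qed

lemma integral_solution_picard_limit: "integral_solution F y0 (picard_limit y0)"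
proof -
  let ?p = "picard_iterate F y0" and ?y = "picard_limit y0"
  have solves: "((\<lambda>s. F (?y s)) has_integral (?y t - y0)) {0..t}" if t: "0 \<le> t" for t
  proof -
    have "uniform_limit {0..t} (\<lambda>n s. F (?p n s)) (\<lambda>s. F (?y s)) sequentially"
      using uniform_limit_compose[OF uniform_limit_picard_iterate[OF t] uniformly_continuous_on_field]
      by (simp add: comp_def)
    then obtain I J where I: "\<And>n. ((\<lambda>s. F (?p n s)) has_integral I n) {0..t}"
        and J: "((\<lambda>s. F (?y s)) has_integral J) {0..t}" and "I \<longlonglongrightarrow> J"
      by (rule uniform_limit_integral)
        (auto intro: continuous_on_compose2[OF continuous_on_field continuous_on_picard_iterate])
    moreover have "I = (\<lambda>n. ?p (Suc n) t - y0)"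
      using has_integral_unique[OF I picard_iterate_has_integral] by (intro ext)
    moreover have "(\<lambda>n. ?p (Suc n) t) \<longlonglongrightarrow> ?y t"
      by (rule LIMSEQ_Suc[OF tendsto_uniform_limitI[OF uniform_limit_picard_iterate[OF t]]])
        (use t in simp)
    then have "(\<lambda>n. ?p (Suc n) t - y0) \<longlonglongrightarrow> ?y t - y0"
      by (intro tendsto_diff tendsto_const)
    ultimately show ?thesis
      by (metis LIMSEQ_unique)
  qed
  moreover have "?y 0 = y0"
    using has_integral_bound_base[OF order_refl solves] by (simp add: picard_bound_0)
  ultimately show ?thesis
    by (simp add: integral_solution_def)
qed

theorem integral_solution_exists_unique:
  "\<exists>y. integral_solution F y0 y \<and> (\<forall>z. integral_solution F y0 z \<longrightarrow> (\<forall>t\<ge>0. z t = y t))"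
proof (intro exI conjI allI impI)
  show "integral_solution F y0 (picard_limit y0)"
    by (rule integral_solution_picard_limit)
  fix z and t :: real
  assume "integral_solution F y0 z" and "0 \<le> t"
  then show "z t = picard_limit y0 t"
    using tendsto_picard_iterate_integral_solution[OF integral_solution_picard_limit]
      tendsto_picard_iterate_integral_solution LIMSEQ_unique by blast
qed

end

lemma simplex_on_component_bounds:
  assumes "x \<in> simplex_on B"
  shows "0 \<le> x $ \<alpha> \<and> x $ \<alpha> \<le> 1"
proof (cases "\<alpha> \<in> B")
  case True
  have "x $ \<alpha> \<le> (\<Sum>\<beta>\<in>B. x $ \<beta>)"
    using True assms by (intro member_le_sum) (auto simp: simplex_on_def)
  then show ?thesis
    using assms by (auto simp: simplex_on_def)
next
  case False
  then show ?thesis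
    using assms by (auto simp: simplex_on_def)
qed

lemma compact_simplex_on: "compact (simplex_on B)"
proof (rule compact_eq_bounded_closed[THEN iffD2], intro conjI)
  have "simplex_on B \<subseteq> cbox 0 1"
    using simplex_on_component_bounds by (auto simp: mem_box_cart) blast+
  then show "bounded (simplex_on B)"
    using bounded_cbox bounded_subset by blast
  have "simplex_on B = (\<Inter>\<beta>. {x. 0 \<le> x $ \<beta>}) \<inter> (\<Inter>\<beta>\<in>-B. {x. x $ \<beta> = 0}) \<inter> {x. (\<Sum>\<beta>\<in>B. x $ \<beta>) = 1}"
    by (auto simp: simplex_on_def)
  also have "closed \<dots>"
    by (intro closed_Int closed_INT ballI closed_Collect_le closed_Collect_eq continuous_intros)
  finally show "closed (simplex_on B)" .
qed

lemma axis_in_simplex_on: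
  assumes "\<alpha> \<in> B"
  shows "axis \<alpha> 1 \<in> simplex_on B"
  using assms by (auto simp: simplex_on_def axis_def if_distrib sum.delta cong: if_cong)

lemma convex_simplex_on: "convex (simplex_on B)"
  unfolding convex_def simplex_on_def
  by (auto simp: sum.distrib sum_distrib_left[symmetric])

lemma strongly_convex_maximizer_gap:
  fixes S :: "'v::real_inner set"
  assumes "convex S" and "strongly_convex_on S K h"
    and x: "x \<in> S" and max: "\<forall>x'\<in>S. inner y x' - h x' \<le> inner y x - h x"
    and x': "x' \<in> S"
  shows "inner y x' - h x' + K / 4 * (norm (x' - x))\<^sup>2 \<le> inner y x - h x"
proof -
  let ?m = "(1/2) *\<^sub>R x' + (1 - 1/2) *\<^sub>R x"
  have "?m \<in> S"
    using \<open>convex S\<close> x' x by (rule convexD) auto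
  then have "inner y ?m - h ?m \<le> inner y x - h x"
    using max by blast
  moreover have "h ?m \<le> 1/2 * h x' + (1 - 1/2) * h x - K * (1/2) * (1 - 1/2) * (norm (x' - x))\<^sup>2 / 2"
    using assms(2) x' x unfolding strongly_convex_on_def by (elim ballE allE[of _ "1/2"]) auto
  moreover have "inner y ?m = 1/2 * inner y x' + 1/2 * inner y x"
    by (simp add: inner_add_right)
  ultimately show ?thesis
    by simp
qed

lemma choice_map_maximizes:
  assumes "B \<noteq> {}" and "K > 0" and sc: "strongly_convex_on (simplex_on B) K h"
    and "continuous_on (simplex_on B) h"
  shows "choice_map B h y \<in> simplex_on B \<and>
    (\<forall>x'\<in>simplex_on B. inner y x' - h x' \<le> inner y (choice_map B h y) - h (choice_map B h y))"
    (is "?is_max (choice_map B h y)")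
proof -
  have "simplex_on B \<noteq> {}"
    using assms(1) axis_in_simplex_on by blast
  moreover have "continuous_on (simplex_on B) (\<lambda>x. inner y x - h x)"
    by (intro continuous_intros assms(4))
  ultimately obtain x where x: "?is_max x"
    using continuous_attains_sup[OF compact_simplex_on] by blast
  have "x' = x" if "?is_max x'" for x'
  proof -
    have "inner y x' - h x' + K / 4 * (norm (x' - x))\<^sup>2 \<le> inner y x - h x"
      using convex_simplex_on sc x that by (intro strongly_convex_maximizer_gap) auto
    moreover have "inner y x - h x \<le> inner y x' - h x'"
      using that x by blast
    ultimately have "K / 4 * (norm (x' - x))\<^sup>2 \<le> 0"
      by linarith
    then show "x' = x"
      using \<open>K > 0\<close> by (simp add: mult_le_0_iff)
  qed
  with x have "\<exists>!x. ?is_max x"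
    by blast
  then show ?thesis
    unfolding choice_map_def by (rule theI')
qed

text \<open>Adding the two quadratic-gap inequalities for y and y' bounds
  K/2 |Q y - Q y'|^2 by <y - y', Q y - Q y'>.\<close>
lemma lipschitz_choice_map:
  assumes "B \<noteq> {}" and K: "K > 0" and sc: "strongly_convex_on (simplex_on B) K h"
    and "continuous_on (simplex_on B) h"
  shows "(2 / K)-lipschitz_on UNIV (choice_map B h)"
proof (rule lipschitz_onI)
  show "0 \<le> 2 / K"
    using K by simp
  fix y y'
  let ?x = "choice_map B h y" and ?x' = "choice_map B h y'"
  note max = choice_map_maximizes[OF assms]
  have "inner y ?x' - h ?x' + K / 4 * (norm (?x' - ?x))\<^sup>2 \<le> inner y ?x - h ?x"
    and "inner y' ?x - h ?x + K / 4 * (norm (?x - ?x'))\<^sup>2 \<le> inner y' ?x' - h ?x'"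
    using max[of y] max[of y'] by (intro strongly_convex_maximizer_gap[OF convex_simplex_on sc]; blast)+
  then have "K / 2 * (norm (?x - ?x'))\<^sup>2 \<le> inner (y - y') (?x - ?x')"
    by (simp add: norm_minus_commute inner_diff_left inner_diff_right)
  also have "\<dots> \<le> norm (y - y') * norm (?x - ?x')"
    by (rule norm_cauchy_schwarz)
  finally have "K / 2 * norm (?x - ?x') \<le> norm (y - y')"
    by (cases "norm (?x - ?x') = 0") (auto simp: power2_eq_square)
  then show "dist ?x ?x' \<le> 2 / K * dist y y'"
    using K by (simp add: dist_norm field_simps)
qed

lemma penalty_function_choice_map:
  assumes "penalty_function B h" and "B \<noteq> {}"
  shows "choice_map B h y \<in> simplex_on B" and "\<exists>C. C-lipschitz_on UNIV (choice_map B h)"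
proof -
  obtain K where "K > 0" "strongly_convex_on (simplex_on B) K h" "continuous_on (simplex_on B) h"
    using assms(1) unfolding penalty_function_def by blast
  with assms(2) show "choice_map B h y \<in> simplex_on B" and "\<exists>C. C-lipschitz_on UNIV (choice_map B h)"
    using choice_map_maximizes[of B K h y] lipschitz_choice_map[of B K h] by auto
qed

lemma norm_le_card_cart_cart:
  fixes v :: "real^'a::finite^'p::finite" and c :: real
  assumes "\<And>k \<alpha>. \<bar>v $ k $ \<alpha>\<bar> \<le> c"
  shows "norm v \<le> CARD('p) * CARD('a) * c"
proof -
  have "norm v \<le> (\<Sum>k\<in>UNIV. norm (v $ k))"
    unfolding norm_vec_def by (rule L2_set_le_sum) simp
  also have "\<dots> \<le> (\<Sum>k\<in>UNIV. \<Sum>\<alpha>\<in>UNIV. \<bar>v $ k $ \<alpha>\<bar>)"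
    by (intro sum_mono norm_le_l1_cart)
  also have "\<dots> \<le> (\<Sum>k\<in>(UNIV :: 'p set). \<Sum>\<alpha>\<in>(UNIV :: 'a set). c)"
    by (intro sum_mono assms)
  finally show ?thesis
    by simp
qed

lemma abs_mixed_payoff_le:
  fixes x :: "real^'a::finite^'p::finite" and uk :: "('p \<Rightarrow> 'a) \<Rightarrow> real"
  assumes "\<And>l \<alpha>. \<bar>x $ l $ \<alpha>\<bar> \<le> 1"
  shows "\<bar>mixed_payoff A uk x\<bar> \<le> (\<Sum>\<beta>\<in>PiE UNIV A. \<bar>uk \<beta>\<bar>)"
proof -
  have "\<bar>mixed_payoff A uk x\<bar> \<le> (\<Sum>\<beta>\<in>PiE UNIV A. \<bar>uk \<beta>\<bar> * \<bar>\<Prod>l\<in>UNIV. x $ l $ \<beta> l\<bar>)"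
    unfolding mixed_payoff_def by (rule order_trans[OF sum_abs]) (simp add: abs_mult)
  also have "\<dots> \<le> (\<Sum>\<beta>\<in>PiE UNIV A. \<bar>uk \<beta>\<bar>)"
    using assms by (intro sum_mono mult_right_le_one_le) (auto simp: abs_prod intro: prod_le_1 prod_nonneg)
  finally show ?thesis .
qed

lemma abs_mixed_payoff_diff_le:
  fixes x x' :: "real^'a::finite^'p::finite" and uk :: "('p \<Rightarrow> 'a) \<Rightarrow> real" and \<delta> :: real
  assumes "\<And>l \<alpha>. \<bar>x $ l $ \<alpha>\<bar> \<le> 1" and "\<And>l \<alpha>. \<bar>x' $ l $ \<alpha>\<bar> \<le> 1"
    and "\<And>l \<alpha>. \<bar>x $ l $ \<alpha> - x' $ l $ \<alpha>\<bar> \<le> \<delta>"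
  shows "\<bar>mixed_payoff A uk x - mixed_payoff A uk x'\<bar> \<le> (\<Sum>\<beta>\<in>PiE UNIV A. \<bar>uk \<beta>\<bar>) * (CARD('p) * \<delta>)"
proof -
  have "\<bar>mixed_payoff A uk x - mixed_payoff A uk x'\<bar>
      \<le> (\<Sum>\<beta>\<in>PiE UNIV A. \<bar>uk \<beta>\<bar> * \<bar>(\<Prod>l\<in>UNIV. x $ l $ \<beta> l) - (\<Prod>l\<in>UNIV. x' $ l $ \<beta> l)\<bar>)"
    unfolding mixed_payoff_def
    by (simp flip: sum_subtractf right_diff_distrib add: abs_mult order_trans[OF sum_abs])
  also have "\<dots> \<le> (\<Sum>\<beta>\<in>PiE UNIV A. \<bar>uk \<beta>\<bar> * (CARD('p) * \<delta>))"
  proof (intro sum_mono mult_left_mono)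
    fix \<beta> :: "'p \<Rightarrow> 'a"
    have "\<bar>(\<Prod>l\<in>UNIV. x $ l $ \<beta> l) - (\<Prod>l\<in>UNIV. x' $ l $ \<beta> l)\<bar> \<le> (\<Sum>l\<in>UNIV. \<bar>x $ l $ \<beta> l - x' $ l $ \<beta> l\<bar>)"
      using norm_prod_diff[of UNIV "\<lambda>l. x $ l $ \<beta> l" "\<lambda>l. x' $ l $ \<beta> l"] assms(1,2) by simp
    also have "\<dots> \<le> (\<Sum>l\<in>(UNIV :: 'p set). \<delta>)"
      by (intro sum_mono assms(3))
    finally show "\<bar>(\<Prod>l\<in>UNIV. x $ l $ \<beta> l) - (\<Prod>l\<in>UNIV. x' $ l $ \<beta> l)\<bar> \<le> CARD('p) * \<delta>"
      by simp
  qed simp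
  finally show ?thesis
    by (simp add: sum_distrib_right)
qed

lemma abs_payoff_vector_le:
  fixes x :: "real^'a::finite^'p::finite"
  assumes "\<And>l \<beta>. \<bar>x $ l $ \<beta>\<bar> \<le> 1"
  shows "\<bar>payoff_vector A u k x $ \<alpha>\<bar> \<le> (\<Sum>\<beta>\<in>PiE UNIV A. \<bar>u k \<beta>\<bar>)"
  using assms abs_mixed_payoff_le[of "\<chi> l. if l = k then axis \<alpha> 1 else x $ l" A "u k"]
  by (auto simp: payoff_vector_def axis_def sum_nonneg)

lemma abs_payoff_vector_diff_le:
  fixes x x' :: "real^'a::finite^'p::finite" and \<delta> :: real
  assumes "\<And>l \<beta>. \<bar>x $ l $ \<beta>\<bar> \<le> 1" and "\<And>l \<beta>. \<bar>x' $ l $ \<beta>\<bar> \<le> 1"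
    and "\<And>l \<beta>. \<bar>x $ l $ \<beta> - x' $ l $ \<beta>\<bar> \<le> \<delta>"
  shows "\<bar>payoff_vector A u k x $ \<alpha> - payoff_vector A u k x' $ \<alpha>\<bar>
    \<le> (\<Sum>\<beta>\<in>PiE UNIV A. \<bar>u k \<beta>\<bar>) * (CARD('p) * \<delta>)"
proof -
  have "0 \<le> \<delta>"
    using assms(3) abs_ge_zero order_trans by blast
  then show ?thesis
    using assms abs_mixed_payoff_diff_le[of "\<chi> l. if l = k then axis \<alpha> 1 else x $ l"
        "\<chi> l. if l = k then axis \<alpha> 1 else x' $ l" \<delta> A "u k"]
    by (auto simp: payoff_vector_def axis_def sum_nonneg)
qed

lemma bounded_RL_field:
  fixes A :: "'p::finite \<Rightarrow> 'a::finite set"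
  assumes "\<And>l y. choice_map (A l) (h l) y \<in> simplex_on (A l)"
  shows "\<exists>M. \<forall>y. norm (RL_field A u h y) \<le> M"
proof -
  define C where "C = (\<Sum>k\<in>UNIV. \<Sum>\<beta>\<in>PiE UNIV A. \<bar>u k \<beta>\<bar>)"
  have "\<bar>RL_field A u h y $ k $ \<alpha>\<bar> \<le> C" for y k \<alpha>
  proof -
    have "\<bar>RL_field A u h y $ k $ \<alpha>\<bar> \<le> (\<Sum>\<beta>\<in>PiE UNIV A. \<bar>u k \<beta>\<bar>)"
      unfolding RL_field_def
      using simplex_on_component_bounds[OF assms] by (auto intro: abs_payoff_vector_le)
    also have "\<dots> \<le> C"
      unfolding C_def by (intro member_le_sum) (auto intro: sum_nonneg)
    finally show ?thesis .
  qed
  then show ?thesis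
    by (blast intro: norm_le_card_cart_cart)
qed

lemma lipschitz_RL_field:
  fixes A :: "'p::finite \<Rightarrow> 'a::finite set"
  assumes "\<And>l y. choice_map (A l) (h l) y \<in> simplex_on (A l)"
    and lipschitz: "\<And>l. (Lc l)-lipschitz_on UNIV (choice_map (A l) (h l))"
  shows "\<exists>L. L-lipschitz_on UNIV (RL_field A u h)"
proof -
  define X where "X y = (\<chi> l. choice_map (A l) (h l) (y $ l))" for y :: "real^'a^'p"
  define Lq where "Lq = (\<Sum>l\<in>UNIV. Lc l)"
  define C where "C = (\<Sum>k\<in>UNIV. \<Sum>\<beta>\<in>PiE UNIV A. \<bar>u k \<beta>\<bar>)"
  have "0 \<le> Lq" "0 \<le> C"
    unfolding Lq_def C_def using lipschitz_on_nonneg[OF lipschitz] by (auto intro: sum_nonneg)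
  have X_bounds: "\<bar>X y $ l $ \<beta>\<bar> \<le> 1" for y l \<beta>
    unfolding X_def using simplex_on_component_bounds[OF assms(1)] by simp
  have X_diff: "\<bar>X y $ l $ \<beta> - X y' $ l $ \<beta>\<bar> \<le> Lq * norm (y - y')" for y y' l \<beta>
  proof -
    have "\<bar>X y $ l $ \<beta> - X y' $ l $ \<beta>\<bar> \<le> norm (X y $ l - X y' $ l)"
      using component_le_norm_cart[of "X y $ l - X y' $ l" \<beta>] by simp
    also have "\<dots> \<le> Lc l * norm (y $ l - y' $ l)"
      unfolding X_def using lipschitz_on_normD[OF lipschitz] by simp
    also have "\<dots> \<le> Lq * norm (y - y')"
      using \<open>0 \<le> Lq\<close> lipschitz_on_nonneg[OF lipschitz] Finite_Cartesian_Product.norm_nth_le[of "y - y'" l]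
      unfolding Lq_def by (intro mult_mono member_le_sum) auto
    finally show ?thesis .
  qed
  have "\<bar>(RL_field A u h y - RL_field A u h y') $ k $ \<alpha>\<bar> \<le> C * (CARD('p) * (Lq * norm (y - y')))"
    for y y' k \<alpha>
  proof -
    have "\<bar>(RL_field A u h y - RL_field A u h y') $ k $ \<alpha>\<bar>
        \<le> (\<Sum>\<beta>\<in>PiE UNIV A. \<bar>u k \<beta>\<bar>) * (CARD('p) * (Lq * norm (y - y')))"
      unfolding RL_field_def X_def[symmetric]
      using X_bounds X_diff by (simp add: abs_payoff_vector_diff_le)
    also have "\<dots> \<le> C * (CARD('p) * (Lq * norm (y - y')))"
      unfolding C_def using \<open>0 \<le> Lq\<close>
      by (intro mult_right_mono member_le_sum) (auto intro: sum_nonneg)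
    finally show ?thesis .
  qed
  then have "norm (RL_field A u h y - RL_field A u h y')
      \<le> (CARD('p) * CARD('a) * C * CARD('p) * Lq) * norm (y - y')" for y y'
    using norm_le_card_cart_cart by (fastforce simp: mult_ac)
  then show ?thesis
    using \<open>0 \<le> Lq\<close> \<open>0 \<le> C\<close>
    by (intro exI[of _ "CARD('p) * CARD('a) * C * CARD('p) * Lq"] lipschitz_onI) (auto simp: dist_norm)
qed

theorem proposition3p1:
  fixes A :: "'p::finite \<Rightarrow> 'a::finite set"
    and u :: "'p \<Rightarrow> ('p \<Rightarrow> 'a) \<Rightarrow> real"
    and h :: "'p \<Rightarrow> real^'a \<Rightarrow> real"
    and y0 :: "real^'a^'p"
  assumes "\<And>k. A k \<noteq> {}"
    and "\<And>k. penalty_function (A k) (h k)"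
    and "\<And>k. y0$k \<in> score_space (A k)"
  shows "\<exists>y :: real \<Rightarrow> real^'a^'p.
           (y 0 = y0 \<and> (\<forall>t\<ge>0. ((\<lambda>s. RL_field A u h (y s)) has_integral (y t - y0)) {0..t}))
         \<and> (\<forall>z :: real \<Rightarrow> real^'a^'p.
              (z 0 = y0 \<and> (\<forall>t\<ge>0. ((\<lambda>s. RL_field A u h (z s)) has_integral (z t - y0)) {0..t}))
              \<longrightarrow> (\<forall>t\<ge>0. z t = y t))"
proof -
  note choice = penalty_function_choice_map[OF assms(2,1)]
  obtain Lc where "\<And>l. (Lc l)-lipschitz_on UNIV (choice_map (A l) (h l))"
    using choice(2) by metis
  then obtain L where "L-lipschitz_on UNIV (RL_field A u h)"
    using lipschitz_RL_field choice(1) by blast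
  moreover obtain M where "\<And>y. norm (RL_field A u h y) \<le> M"
    using bounded_RL_field choice(1) by blast
  ultimately interpret bounded_lipschitz_field "RL_field A u h" L M
    by unfold_locales
  show ?thesis
    using integral_solution_exists_unique[of y0] by (simp add: integral_solution_def)
qed

end
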